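(* Let $n\ge 1$ and let $f(x)=x^n+\sum_{i=1}^{n}c_i x^{n-i}$ be an irreducible polynomial over $\mathrm{GF}(2)$ with $f(x)\neq x$. Let $B$ be the binary matrix with $2^n-1$ rows and columns indexed by $j=0,1,2,\ldots$, whose rows are indexed by the nonzero initial states $s=(a_{-n},\ldots,a_{-1})\in\mathrm{GF}(2)^n\setminus\{0\}$, the row indexed by $s$ being the sequence $a_0,a_1,a_2,\ldots$ determined by $a_k=\sum_{i=1}^{n}c_i a_{k-i}$ (mod $2$) from the initial state $s$. Let $R$ be a set of $n$ distinct nonnegative integers and define the set polynomial $$g_R(x)=\prod_{\emptyset\neq Q\subseteq R}\ \sum_{r\in Q}x^{r}\in\mathrm{GF}(2)[x].$$ Then the submatrix of $B$ formed by the $n$ columns indexed by $R$ contains every nonzero binary $n$-tuple as a row if and only if $f(x)$ does not divide $g_R(x)$.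
   Context: Equivalently, the rows of $B$ are all cyclic shifts of all nonzero sequences satisfying the linear recurrence associated with $f(x)$. *)

theory Defs
  imports "HOL-Library.Z2" "HOL-Computational_Algebra.Polynomial"
begin

text \<open>For a monic polynomial f of degree n over GF(2),
  write f = x^n + sum_{i=1..n} c_i x^(n-i), so c_i = coeff f (n - i).
  The full sequence with initial state is indexed from 0:
  lfsr f s m = a_(m-n); for m < n this is the initial state entry s m
  (s m = a_(m-n)), and for m >= n the recurrence a_k = sum c_i a_(k-i) holds.
  Hence column j of the matrix B is lfsr f s (j + n).\<close>

function lfsr :: "bit poly \<Rightarrow> (nat \<Rightarrow> bit) \<Rightarrow> nat \<Rightarrow> bit" where
  "lfsr f s m =
     (if m < degree f then s m
      else (\<Sum>i\<in>{1..degree f}. coeff f (degree f - i) * lfsr f s (m - i)))"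
  by auto
termination
  by (relation "measure (\<lambda>(f, s, m). m)") auto

definition set_poly :: "nat set \<Rightarrow> bit poly" where
  "set_poly R = (\<Prod>Q\<in>{Q. Q \<subseteq> R \<and> Q \<noteq> {}}. \<Sum>r\<in>Q. monom 1 r)"

end

theory Submission
  imports Defs "HOL-Library.FuncSet"
begin

(* Pair a sequence b with a polynomial h by <b, h> = sum_j coeff h j * b j.  Over GF(2) the
   recurrence of f says precisely that every LFSR sequence pairs to zero with all multiples of f,
   and the sum of the columns r + n (r in Q) of a row is its pairing with x^n p_Q, where
   p_Q = sum_{r in Q} x^r.
   If f divides g_R then, f being prime, it divides some p_Q with Q nonempty; the columns indexed
   by Q then sum to zero in every row, so the indicator of one element of Q never occurs.
   If f divides no such p_Q, the 2^n polynomials p_Q (Q a subset of R) are pairwise incongruent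
   modulo f and so represent every residue class.  A row vanishing on the columns R therefore
   pairs to zero with every x^n h, hence (x being invertible modulo f, as f <> x) with every
   polynomial, and its initial state is zero.  The linear map from initial states to R-columns is
   thus injective between two sets of size 2^n, hence onto. *)

section \<open>Bezout and prime elements in Euclidean rings\<close>

lemma bezout_common_divisor:
  fixes a b :: "'a::euclidean_ring"
  obtains d u v where "d dvd a" "d dvd b" "d = u * a + v * b"
proof (induction b arbitrary: a thesis rule: measure_induct_rule[of euclidean_size])
  case (less b)
  show ?case
  proof (cases "b = 0")
    case True
    then show ?thesis by (intro less.prems[of a 1 0]) simp_all
  next
    case False
    then obtain d u v where d: "d dvd b" "d dvd a mod b" "d = u * b + v * (a mod b)"
      using less.IH[of "a mod b" b] mod_size_less by blast
    have "d dvd a"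
      using d(1,2) by (metis div_mult_mod_eq dvd_add dvd_mult)
    moreover have "d = v * a + (u - v * (a div b)) * b"
      unfolding d(3) minus_div_mult_eq_mod[symmetric] by (simp add: algebra_simps)
    ultimately show ?thesis using d(1) less.prems by blast
  qed
qed

lemma irreducible_bezout:
  fixes p a :: "'a::euclidean_ring"
  assumes "irreducible p" and "\<not> p dvd a"
  obtains u v where "u * a + v * p = 1"
proof -
  obtain d u v where d: "d dvd a" "d dvd p" "d = u * a + v * p"
    by (rule bezout_common_divisor)
  from \<open>d dvd p\<close> obtain e where "p = d * e" ..
  with assms have "is_unit d"
    by (metis d(1) dvd_mult_unit_iff dvd_refl dvd_trans irreducibleD)
  then obtain k where "1 = d * k" ..
  then have "(k * u) * a + (k * v) * p = 1"
    unfolding d(3) by (simp add: algebra_simps)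
  then show ?thesis ..
qed

lemma irreducible_imp_prime_elem_euclidean:
  fixes p :: "'a::euclidean_ring"
  assumes "irreducible p"
  shows "prime_elem p"
proof (rule prime_elemI)
  show "p \<noteq> 0" "\<not> p dvd 1"
    using assms by (auto simp: irreducible_def)
next
  fix a b
  assume "p dvd a * b"
  show "p dvd a \<or> p dvd b"
  proof (rule disjCI)
    assume "\<not> p dvd b"
    then obtain u v where "u * b + v * p = 1"
      using assms by (blast elim: irreducible_bezout)
    then have "a = u * (a * b) + p * (v * a)"
      by (metis mult_1_right distrib_left mult.commute mult.left_commute)
    with \<open>p dvd a * b\<close> show "p dvd a"
      by (metis dvd_add dvd_mult dvd_triv_left)
  qed
qed

lemma prime_elem_dvd_prod_iff:
  assumes "prime_elem p" and "finite A"
  shows "p dvd (\<Prod>x\<in>A. g x) \<longleftrightarrow> (\<exists>x\<in>A. p dvd g x)"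
  using assms(2)
proof (induction A rule: finite_induct)
  case empty
  then show ?case using assms(1) by (simp add: prime_elem_not_unit)
next
  case (insert x A)
  then show ?case using assms(1) by (simp add: prime_elem_dvd_mult_iff)
qed

lemma monic_dvd_x_imp_eq:
  fixes f :: "'a::idom poly"
  assumes "lead_coeff f = 1" and "0 < degree f" and "f dvd [:0, 1:]"
  shows "f = [:0, 1:]"
proof -
  obtain q where q: "[:0, 1:] = f * q"
    using assms(3) ..
  then have "q \<noteq> 0" "f \<noteq> 0" by auto
  moreover have "degree (f * q) = 1"
    unfolding q[symmetric] by simp
  ultimately have "degree q = 0"
    using assms(2) by (simp add: degree_mult_eq)
  have "lead_coeff (f * q) = 1"
    unfolding q[symmetric] by simp
  then have "lead_coeff q = 1"
    by (simp only: lead_coeff_mult assms(1) mult_1)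
  with \<open>degree q = 0\<close> have "q = 1"
    using degree_0_id[of q] by (simp add: one_pCons)
  then show ?thesis
    using q by simp
qed

lemma irreducible_not_dvd_monom:
  fixes f :: "'a::field poly"
  assumes "irreducible f" and "lead_coeff f = 1" and "0 < degree f" and "f \<noteq> [:0, 1:]"
  shows "\<not> f dvd monom 1 n"
proof
  assume "f dvd monom 1 n"
  then have "f dvd [:0, 1:] ^ n"
    by (simp add: monom_altdef)
  then have "f dvd [:0, 1:]"
    using irreducible_imp_prime_elem_euclidean[OF assms(1)] prime_elem_dvd_power by blast
  with assms(2-4) show False
    using monic_dvd_x_imp_eq by blast
qed

section \<open>Pairing a sequence with a polynomial\<close>

definition pairing :: "(nat \<Rightarrow> 'a::comm_semiring_0) \<Rightarrow> 'a poly \<Rightarrow> 'a" where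
  "pairing b h = (\<Sum>j\<le>degree h. coeff h j * b j)"

lemma pairing_eq_sum_lessThan:
  assumes "degree h < N"
  shows "pairing b h = (\<Sum>j<N. coeff h j * b j)"
proof -
  have "{..degree h} \<subseteq> {..<N}"
    using assms by auto
  then show ?thesis
    unfolding pairing_def by (intro sum.mono_neutral_left) (auto simp: coeff_eq_0)
qed

lemma pairing_0 [simp]: "pairing b 0 = 0"
  by (simp add: pairing_def)

lemma pairing_add: "pairing b (p + q) = pairing b p + pairing b q"
proof -
  define N where "N = Suc (max (degree p) (degree q))"
  have "degree p < N" "degree q < N" "degree (p + q) < N"
    unfolding N_def using degree_add_le_max[of p q] by auto
  then show ?thesis
    by (simp add: pairing_eq_sum_lessThan sum.distrib distrib_right)
qed

lemma pairing_smult: "pairing b (smult a h) = a * pairing b h"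
proof -
  have "degree (smult a h) < Suc (degree h)"
    using degree_smult_le[of a h] by simp
  then have "pairing b (smult a h) = (\<Sum>j<Suc (degree h). a * (coeff h j * b j))"
    by (simp add: pairing_eq_sum_lessThan mult.assoc del: sum.lessThan_Suc)
  also have "\<dots> = a * pairing b h"
    by (simp add: pairing_eq_sum_lessThan[of h "Suc (degree h)"] sum_distrib_left
        del: sum.lessThan_Suc)
  finally show ?thesis .
qed

lemma pairing_sum: "pairing b (\<Sum>x\<in>A. g x) = (\<Sum>x\<in>A. pairing b (g x))"
  by (induction A rule: infinite_finite_induct) (simp_all add: pairing_add)

lemma pairing_monom: "pairing b (monom 1 r) = b r"
  for b :: "nat \<Rightarrow> 'a::comm_semiring_1"
proof -
  have "pairing b (monom 1 r) = (\<Sum>j<Suc r. coeff (monom 1 r) j * b j)"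
    by (rule pairing_eq_sum_lessThan) (simp add: degree_monom_eq)
  also have "\<dots> = (\<Sum>j<Suc r. if j = r then b j else 0)"
    by (rule sum.cong) (auto simp: coeff_monom)
  also have "\<dots> = b r"
    by (simp add: sum.delta')
  finally show ?thesis .
qed

lemma pairing_pCons_0: "pairing b (pCons 0 h) = pairing (\<lambda>j. b (Suc j)) h"
proof -
  have "degree (pCons 0 h) < Suc (Suc (degree h))"
    by (metis degree_pCons_le le_imp_less_Suc)
  then have "pairing b (pCons 0 h) = (\<Sum>j<Suc (Suc (degree h)). coeff (pCons 0 h) j * b j)"
    by (rule pairing_eq_sum_lessThan)
  also have "\<dots> = (\<Sum>j<Suc (degree h). coeff h j * b (Suc j))"
    by (subst sum.lessThan_Suc_shift) simp
  also have "\<dots> = pairing (\<lambda>j. b (Suc j)) h"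
    by (rule pairing_eq_sum_lessThan[symmetric]) simp
  finally show ?thesis .
qed

lemma pairing_eq_0_of_bezout:
  assumes "u * g + v * f = 1"
    and "\<And>q. pairing b (f * q) = 0" and "\<And>q. pairing b (g * q) = 0"
  shows "pairing b h = 0"
proof -
  have "h = (u * g + v * f) * h"
    using assms(1) by simp
  also have "\<dots> = g * (u * h) + f * (v * h)"
    by (simp add: algebra_simps)
  finally have "pairing b h = pairing b (g * (u * h)) + pairing b (f * (v * h))"
    by (metis pairing_add)
  with assms(2,3) show ?thesis
    by simp
qed

section \<open>Linear recurrences over GF(2)\<close>

(* Treat + and * on bit as field operations, not as the bit operations xor and and. *)
declare add_bit_eq_xor [simp del] mult_bit_eq_and [simp del]

lemma bit_add_self [simp]: "x + x = (0 :: bit)"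
  by (cases x) simp_all

lemma bit_add_eq_0_iff: "x + y = (0 :: bit) \<longleftrightarrow> x = y"
  by (cases x; cases y) simp_all

definition lin_recurrent :: "bit poly \<Rightarrow> (nat \<Rightarrow> bit) \<Rightarrow> bool" where
  "lin_recurrent f b \<longleftrightarrow>
     (\<forall>m\<ge>degree f. b m = (\<Sum>i\<in>{1..degree f}. coeff f (degree f - i) * b (m - i)))"

lemma lin_recurrent_shift:
  assumes "lin_recurrent f b"
  shows "lin_recurrent f (\<lambda>j. b (Suc j))"
  unfolding lin_recurrent_def
proof (intro allI impI)
  fix m
  assume m: "degree f \<le> m"
  have "b (Suc m) = (\<Sum>i\<in>{1..degree f}. coeff f (degree f - i) * b (Suc m - i))"
    using assms m unfolding lin_recurrent_def by simp
  also have "\<dots> = (\<Sum>i\<in>{1..degree f}. coeff f (degree f - i) * b (Suc (m - i)))"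
    using m by (intro sum.cong) (auto simp: Suc_diff_le)
  finally show "b (Suc m) = (\<Sum>i\<in>{1..degree f}. coeff f (degree f - i) * b (Suc (m - i)))" .
qed

lemma pairing_lin_recurrent_eq_0:
  assumes "lin_recurrent f b" and "lead_coeff f = 1"
  shows "pairing b f = 0"
proof -
  define n where "n = degree f"
  define S where "S = (\<Sum>j<n. coeff f j * b j)"
  have "pairing b f = S + b n"
    using assms(2) by (simp add: pairing_def S_def n_def lessThan_Suc_atMost[symmetric])
  also have "b n = (\<Sum>i\<in>{1..n}. coeff f (n - i) * b (n - i))"
    using assms(1) by (simp add: lin_recurrent_def n_def)
  also have "\<dots> = (\<Sum>i<n. coeff f (n - Suc i) * b (n - Suc i))"
    using sum.atLeast1_atMost_eq by simp
  also have "\<dots> = S"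
    unfolding S_def by (rule sum.nat_diff_reindex)
  finally show ?thesis
    \<comment> \<open>\<open>S + S = 0\<close>: this is where characteristic 2 enters\<close>
    by simp
qed

lemma pairing_lin_recurrent_mult_eq_0:
  assumes "lin_recurrent f b" and "lead_coeff f = 1"
  shows "pairing b (f * q) = 0"
  using assms(1)
proof (induction q arbitrary: b)
  case 0
  then show ?case by simp
next
  case (pCons a q)
  have "pairing b (f * pCons a q) = a * pairing b f + pairing (\<lambda>j. b (Suc j)) (f * q)"
    by (simp add: pairing_add pairing_smult pairing_pCons_0)
  then show ?case
    using pairing_lin_recurrent_eq_0[OF pCons.prems assms(2)]
      pCons.IH[OF lin_recurrent_shift[OF pCons.prems]] by simp
qed

declare lfsr.simps [simp del]

lemma lfsr_initial: "k < degree f \<Longrightarrow> lfsr f s k = s k"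
  by (subst lfsr.simps) simp

lemma lfsr_step:
  "degree f \<le> m \<Longrightarrow>
     lfsr f s m = (\<Sum>i\<in>{1..degree f}. coeff f (degree f - i) * lfsr f s (m - i))"
  by (subst lfsr.simps) simp

lemma lin_recurrent_lfsr: "lin_recurrent f (lfsr f s)"
  unfolding lin_recurrent_def using lfsr_step by blast

lemma lfsr_add: "lfsr f (\<lambda>k. s k + s' k) m = lfsr f s m + lfsr f s' m"
proof (induction m rule: less_induct)
  case (less m)
  show ?case
  proof (cases "m < degree f")
    case True
    then show ?thesis by (simp add: lfsr_initial)
  next
    case False
    then have "lfsr f (\<lambda>k. s k + s' k) m =
        (\<Sum>i\<in>{1..degree f}. coeff f (degree f - i) * lfsr f s (m - i)
                            + coeff f (degree f - i) * lfsr f s' (m - i))"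
      by (simp add: lfsr_step less distrib_left)
    also have "\<dots> = lfsr f s m + lfsr f s' m"
      using False by (simp add: sum.distrib lfsr_step)
    finally show ?thesis .
  qed
qed

lemma lfsr_eq_0:
  assumes "\<And>k. k < degree f \<Longrightarrow> s k = 0"
  shows "lfsr f s m = 0"
proof (induction m rule: less_induct)
  case (less m)
  then show ?case
    using assms by (cases "m < degree f") (simp_all add: lfsr_initial lfsr_step)
qed

definition poly_of_set :: "nat set \<Rightarrow> 'a::comm_semiring_1 poly" where
  "poly_of_set Q = (\<Sum>r\<in>Q. monom 1 r)"

lemma coeff_poly_of_set: "finite Q \<Longrightarrow> coeff (poly_of_set Q) j = (if j \<in> Q then 1 else 0)"
  unfolding poly_of_set_def by (simp add: coeff_sum coeff_monom)

lemma diff_poly_of_set: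
  assumes "finite A" and "finite B"
  shows "poly_of_set A - poly_of_set B = (poly_of_set (A - B \<union> (B - A)) :: bit poly)"
  using assms by (intro poly_eqI) (auto simp: coeff_poly_of_set)

lemma poly_of_set_image_Pow:
  fixes h :: "bit poly"
  assumes "degree h < n"
  shows "h \<in> poly_of_set ` Pow {0..<n}"
proof
  define S where "S = {k\<in>{0..<n}. coeff h k \<noteq> 0}"
  show "S \<in> Pow {0..<n}"
    by (auto simp: S_def)
  show "h = poly_of_set S"
  proof (rule poly_eqI)
    fix j
    show "coeff h j = coeff (poly_of_set S) j"
      using assms by (cases "j < n") (auto simp: coeff_poly_of_set S_def coeff_eq_0)
  qed
qed

lemma pairing_monom_mult_poly_of_set:
  "pairing b (monom 1 n * poly_of_set Q) = (\<Sum>r\<in>Q. b (n + r))"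
  unfolding poly_of_set_def by (simp add: sum_distrib_left mult_monom pairing_sum pairing_monom)

lemma set_poly_eq_prod: "set_poly R = (\<Prod>Q\<in>{Q. Q \<subseteq> R \<and> Q \<noteq> {}}. poly_of_set Q)"
  unfolding set_poly_def poly_of_set_def by simp

section \<open>Columns of the sequence matrix\<close>

lemma ex_poly_of_set_mod_eq:
  fixes f :: "bit poly"
  assumes "degree f = card R" and "0 < degree f" and "finite R"
    and no_dvd: "\<And>Q. Q \<subseteq> R \<Longrightarrow> Q \<noteq> {} \<Longrightarrow> \<not> f dvd poly_of_set Q"
  obtains Q where "Q \<subseteq> R" and "h mod f = poly_of_set Q mod f"
proof -
  define residue where "residue Q = poly_of_set Q mod f" for Q
  define D :: "bit poly set" where "D = poly_of_set ` Pow {0..<degree f}"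
  have "f \<noteq> 0"
    using assms(2) by auto
  have in_D: "g mod f \<in> D" for g
  proof -
    have "degree (g mod f) < degree f"
      using degree_mod_less[OF \<open>f \<noteq> 0\<close>, of g] assms(2) by auto
    then show ?thesis
      unfolding D_def by (rule poly_of_set_image_Pow)
  qed
  have "inj_on residue (Pow R)"
  proof (rule inj_onI)
    fix Q Q'
    assume Q: "Q \<in> Pow R" and Q': "Q' \<in> Pow R" and "residue Q = residue Q'"
    moreover have "finite Q" "finite Q'"
      using Q Q' assms(3) finite_subset by auto
    ultimately have "f dvd poly_of_set (Q - Q' \<union> (Q' - Q))"
      by (simp add: residue_def mod_eq_dvd_iff diff_poly_of_set)
    with no_dvd[of "Q - Q' \<union> (Q' - Q)"] Q Q' have "Q - Q' \<union> (Q' - Q) = {}"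
      by blast
    then show "Q = Q'" by blast
  qed
  then have "card (residue ` Pow R) = 2 ^ degree f"
    using assms(1,3) by (simp add: card_image card_Pow)
  moreover have "finite D"
    unfolding D_def by (intro finite_imageI) simp
  moreover have "card D \<le> 2 ^ degree f"
  proof -
    have "card D \<le> card (Pow {0..<degree f})"
      unfolding D_def by (rule card_image_le) simp
    then show ?thesis
      by (simp add: card_Pow)
  qed
  moreover have "residue ` Pow R \<subseteq> D"
    using in_D by (auto simp: residue_def)
  ultimately have "residue ` Pow R = D"
    using card_seteq[of D "residue ` Pow R"] by linarith
  with in_D[of h] show ?thesis
    using that by (auto simp: residue_def)
qed

lemma lfsr_initial_eq_0_if_columns_eq_0:
  fixes f :: "bit poly"
  assumes "degree f = card R" and "0 < degree f" and "lead_coeff f = 1"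
    and "irreducible f" and "f \<noteq> [:0, 1:]" and "finite R"
    and no_dvd: "\<And>Q. Q \<subseteq> R \<Longrightarrow> Q \<noteq> {} \<Longrightarrow> \<not> f dvd poly_of_set Q"
    and columns: "\<And>r. r \<in> R \<Longrightarrow> lfsr f s (r + degree f) = 0"
    and "k < degree f"
  shows "s k = 0"
proof -
  define n where "n = degree f"
  let ?b = "lfsr f s"
  have multiples: "pairing ?b (f * q) = 0" for q
    using lin_recurrent_lfsr assms(3) by (rule pairing_lin_recurrent_mult_eq_0)
  have shifted: "pairing ?b (monom 1 n * h) = 0" for h
  proof -
    obtain Q where "Q \<subseteq> R" and "h mod f = poly_of_set Q mod f"
      using ex_poly_of_set_mod_eq[OF assms(1,2,6) no_dvd] by blast
    then obtain q where "h - poly_of_set Q = f * q"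
      by (auto simp: mod_eq_dvd_iff elim: dvdE)
    then have "monom 1 n * h = monom 1 n * poly_of_set Q + f * (monom 1 n * q)"
      by (simp add: algebra_simps eq_diff_eq)
    then have "pairing ?b (monom 1 n * h) = (\<Sum>r\<in>Q. ?b (n + r))"
      by (simp add: pairing_add pairing_monom_mult_poly_of_set multiples)
    also have "\<dots> = 0"
      using columns \<open>Q \<subseteq> R\<close> by (simp add: n_def add.commute subset_iff)
    finally show ?thesis .
  qed
  obtain u v where "u * monom 1 n + v * f = 1"
    using irreducible_bezout[OF assms(4) irreducible_not_dvd_monom[OF assms(4,3,2,5)]]
    by (auto simp: n_def)
  then have "pairing ?b (monom 1 k) = 0"
    using multiples shifted by (rule pairing_eq_0_of_bezout)
  then show ?thesis
    using assms(9) by (simp add: pairing_monom lfsr_initial)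
qed

lemma lfsr_columns_surjective:
  fixes f :: "bit poly"
  assumes "degree f = card R" and "0 < degree f" and "lead_coeff f = 1"
    and "irreducible f" and "f \<noteq> [:0, 1:]" and "finite R"
    and "\<And>Q. Q \<subseteq> R \<Longrightarrow> Q \<noteq> {} \<Longrightarrow> \<not> f dvd poly_of_set Q"
  obtains s where "\<And>r. r \<in> R \<Longrightarrow> lfsr f s (r + degree f) = t r"
proof -
  \<comment> \<open>Initial states are extensional on \<open>{0..<degree f}\<close>; \<open>lfsr f s\<close> only reads \<open>s\<close> there.\<close>
  define S where "S = {0..<degree f} \<rightarrow>\<^sub>E (UNIV :: bit set)"
  define T where "T = R \<rightarrow>\<^sub>E (UNIV :: bit set)"
  define columns where "columns s = restrict (\<lambda>r. lfsr f s (r + degree f)) R" for s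
  have "card S = card T"
    using assms(1,6) by (simp add: S_def T_def card_PiE)
  moreover have "columns ` S \<subseteq> T"
    by (auto simp: columns_def T_def)
  moreover have "inj_on columns S"
  proof (rule inj_onI)
    fix s s'
    assume "s \<in> S" "s' \<in> S" "columns s = columns s'"
    then have "lfsr f s (r + degree f) = lfsr f s' (r + degree f)" if "r \<in> R" for r
      using that by (metis columns_def restrict_apply')
    then have "lfsr f (\<lambda>k. s k + s' k) (r + degree f) = 0" if "r \<in> R" for r
      using that by (simp add: lfsr_add)
    then have "s k + s' k = 0" if "k < degree f" for k
      using lfsr_initial_eq_0_if_columns_eq_0[OF assms, of "\<lambda>k. s k + s' k"] that by blast
    then show "s = s'"
      using \<open>s \<in> S\<close> \<open>s' \<in> S\<close> by (auto simp: S_def bit_add_eq_0_iff intro: PiE_ext)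
  qed
  moreover have "finite S" "finite T"
  proof -
    have "(UNIV :: bit set) = {0, 1}"
      using bit.exhaust by auto
    then have "finite (UNIV :: bit set)"
      by (metis finite.emptyI finite.insertI)
    then show "finite S" "finite T"
      using assms(6) by (simp_all add: S_def T_def finite_PiE)
  qed
  ultimately have "\<forall>y\<in>T. \<exists>s\<in>S. columns s = y"
    using surjective_iff_injective_gen[of S T columns] by blast
  moreover have "restrict t R \<in> T"
    by (simp add: T_def restrict_PiE_iff)
  ultimately obtain s where "columns s = restrict t R"
    by blast
  then show ?thesis
    using that by (metis columns_def restrict_apply')
qed

lemma sum_lfsr_columns_eq_0_if_dvd:
  fixes f :: "bit poly"
  assumes "lead_coeff f = 1" and "f dvd poly_of_set Q"
  shows "(\<Sum>r\<in>Q. lfsr f s (r + degree f)) = 0"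
proof -
  obtain q where q: "poly_of_set Q = f * q"
    using assms(2) ..
  have "(\<Sum>r\<in>Q. lfsr f s (r + degree f)) = pairing (lfsr f s) (monom 1 (degree f) * poly_of_set Q)"
    by (simp add: pairing_monom_mult_poly_of_set add.commute)
  also have "\<dots> = pairing (lfsr f s) (f * (monom 1 (degree f) * q))"
    by (simp add: q ac_simps)
  also have "\<dots> = 0"
    using lin_recurrent_lfsr assms(1) by (rule pairing_lin_recurrent_mult_eq_0)
  finally show ?thesis .
qed

lemma not_dvd_poly_of_set_if_patterns_occur:
  fixes f :: "bit poly"
  assumes "lead_coeff f = 1" and "finite R" and "Q \<subseteq> R" and "Q \<noteq> {}"
    and patterns: "\<And>t. \<exists>r\<in>R. t r \<noteq> 0 \<Longrightarrow> \<exists>s. \<forall>r\<in>R. lfsr f s (r + degree f) = t r"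
  shows "\<not> f dvd poly_of_set Q"
proof
  assume "f dvd poly_of_set Q"
  obtain r\<^sub>0 where "r\<^sub>0 \<in> Q"
    using assms(4) by blast
  define t where "t r = (if r = r\<^sub>0 then 1 else 0 :: bit)" for r
  have "\<exists>r\<in>R. t r \<noteq> 0"
    using \<open>r\<^sub>0 \<in> Q\<close> assms(3) by (auto simp: t_def)
  then obtain s where s: "\<forall>r\<in>R. lfsr f s (r + degree f) = t r"
    using patterns by blast
  have "finite Q"
    using assms(2,3) finite_subset by blast
  then have "(\<Sum>r\<in>Q. lfsr f s (r + degree f)) = 1"
    using \<open>r\<^sub>0 \<in> Q\<close> assms(3) s by (simp add: subset_iff t_def sum.delta cong: sum.cong)
  with sum_lfsr_columns_eq_0_if_dvd[OF assms(1) \<open>f dvd poly_of_set Q\<close>] show False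
    by simp
qed

lemma nonzero_pattern_occurs:
  fixes f :: "bit poly"
  assumes "degree f = card R" and "0 < degree f" and "lead_coeff f = 1"
    and "irreducible f" and "f \<noteq> [:0, 1:]" and "finite R"
    and "\<And>Q. Q \<subseteq> R \<Longrightarrow> Q \<noteq> {} \<Longrightarrow> \<not> f dvd poly_of_set Q"
    and "\<exists>r\<in>R. t r \<noteq> 0"
  shows "\<exists>s. (\<exists>k<degree f. s k \<noteq> 0) \<and> (\<forall>r\<in>R. lfsr f s (r + degree f) = t r)"
proof -
  obtain s where s: "\<And>r. r \<in> R \<Longrightarrow> lfsr f s (r + degree f) = t r"
    using lfsr_columns_surjective[OF assms(1-7)] by blast
  obtain r where r: "r \<in> R" "t r \<noteq> 0"
    using assms(8) ..
  have "\<exists>k<degree f. s k \<noteq> 0"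
  proof (rule ccontr)
    assume "\<not> (\<exists>k<degree f. s k \<noteq> 0)"
    then have "lfsr f s (r + degree f) = 0"
      using lfsr_eq_0[of f s] by blast
    with r s show False by simp
  qed
  with s show ?thesis by blast
qed

theorem theorem6:
  fixes f :: "bit poly" and n :: nat and R :: "nat set"
  assumes "n \<ge> 1"
    and "degree f = n" and "lead_coeff f = 1"
    and "irreducible f"
    and "f \<noteq> [:0, 1:]"
    and "finite R" and "card R = n"
  shows "(\<forall>t :: nat \<Rightarrow> bit. (\<exists>r\<in>R. t r \<noteq> 0) \<longrightarrow>
            (\<exists>s :: nat \<Rightarrow> bit. (\<exists>k<n. s k \<noteq> 0) \<and> (\<forall>r\<in>R. lfsr f s (r + n) = t r)))
         \<longleftrightarrow> \<not> f dvd set_poly R"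
proof -
  have deg: "degree f = card R" "0 < degree f"
    using assms(1,2,7) by simp_all
  have "finite {Q. Q \<subseteq> R \<and> Q \<noteq> {}}"
    using assms(6) by simp
  then have dvd_set_poly_iff: "f dvd set_poly R \<longleftrightarrow> (\<exists>Q\<subseteq>R. Q \<noteq> {} \<and> f dvd poly_of_set Q)"
    using irreducible_imp_prime_elem_euclidean[OF assms(4)]
    by (simp add: set_poly_eq_prod prime_elem_dvd_prod_iff)
  show ?thesis
  proof
    assume "\<forall>t. (\<exists>r\<in>R. t r \<noteq> 0) \<longrightarrow>
      (\<exists>s. (\<exists>k<n. s k \<noteq> 0) \<and> (\<forall>r\<in>R. lfsr f s (r + n) = t r))"
    then have "\<exists>s. \<forall>r\<in>R. lfsr f s (r + degree f) = t r" if "\<exists>r\<in>R. t r \<noteq> 0" for t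
      using that assms(2) by blast
    then show "\<not> f dvd set_poly R"
      using not_dvd_poly_of_set_if_patterns_occur[OF assms(3,6)] dvd_set_poly_iff by blast
  next
    assume "\<not> f dvd set_poly R"
    then have "\<And>Q. Q \<subseteq> R \<Longrightarrow> Q \<noteq> {} \<Longrightarrow> \<not> f dvd poly_of_set Q"
      using dvd_set_poly_iff by blast
    from nonzero_pattern_occurs[OF deg assms(3-6) this, unfolded assms(2)]
    show "\<forall>t. (\<exists>r\<in>R. t r \<noteq> 0) \<longrightarrow>
      (\<exists>s. (\<exists>k<n. s k \<noteq> 0) \<and> (\<forall>r\<in>R. lfsr f s (r + n) = t r))"
      by blast
  qed
qed

end
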